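(* Let $F$ be a $4$-regular graph, let $P$ be a circuit partition of $F$, and let $E\subseteq E(F)$ be such that each circuit of $P$ traverses at most one edge of $E$. If $\Gamma$ is a cycle spanning set of $F-E$, then $\Gamma\cup P$ (with the circuits of $P$ given arbitrary orientations) is a cycle spanning set of $F$. If moreover $\Gamma$ is integral, then $\Gamma\cup P$ is an integral cycle spanning set of $F$.
   Context: Graphs: $G=(V,H,E,\epsilon)$ with finite sets of vertices $V$ and half-edges $H$, a partition $E$ of $H$ into unordered pairs (edges), and $\epsilon:H\to V$; loops and multiple edges allowed. For $E'\subseteq E(G)$, $G-E'$ is obtained by deleting the edges of $E'$. A directed version orders each edge as (tail, head). A single transition is an unordered pair of distinct half-edges incident with a common vertex; a directed single transition is such an ordered pair. A closed walk is a sequence $((h_1,h_2),\dots,(h_{n-1},h_n))$ of directed single transitions with $\{h_2,h_3\},\{h_4,h_5\},\dots,\{h_n,h_1\}$ edges, up to cyclic shift. For a directed version $D$ and closed walk $W$, $\sigma(D,W)\in\mathbb Z^{E}$ counts, at each edge $e$, traversals of $e$ along its direction minus traversals against it. A circuit is a nonempty closed walk using each half-edge at most once, with orientation forgotten. The cycle space of $D$ is the right null space over $\mathbb Q$ of its vertex-edge incidence matrix (entry $1$ if $v$ is incident to the tail but not head of $e$, $-1$ if to the head but not tail, $0$ otherwise). A cycle basis of $G$ is a set $B$ of closed walks such that the vectors $\sigma(D,W)$, $W\in B$, are pairwise distinct and form a basis of the cycle space of $D$. A cycle spanning set is a set of closed walks containing a cycle basis. A cycle spanning set $B$ is integral if $\sigma(D,W)$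 lies in the $\mathbb Z$-span of $\{\sigma(D,W'):W'\in B\}$ for every closed walk $W$ of $G$. $F$ is $4$-regular if every vertex is incident with exactly $4$ half-edges. A circuit partition $P$ of $F$ is a set of circuits of $F$ such that every half-edge lies in exactly one single transition of exactly one circuit of $P$. *)

theory Defs
  imports Complex_Main
begin

text \<open>A graph is given by a vertex set V, a half-edge set H, a set Ed of edges
(a partition of H into unordered pairs) and the incidence map eps : H -> V.\<close>

definition is_graph :: "'v set \<Rightarrow> 'h set \<Rightarrow> 'h set set \<Rightarrow> ('h \<Rightarrow> 'v) \<Rightarrow> bool" where
  "is_graph V H Ed eps \<longleftrightarrow> finite V \<and> finite H \<and> eps ` H \<subseteq> V \<and>
     (\<forall>e\<in>Ed. card e = 2 \<and> e \<subseteq> H) \<and> \<Union>Ed = H \<and>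
     (\<forall>e\<in>Ed. \<forall>e'\<in>Ed. e \<noteq> e' \<longrightarrow> e \<inter> e' = {})"

definition del_H :: "'h set \<Rightarrow> 'h set set \<Rightarrow> 'h set" where
  "del_H H Ed' = H - \<Union>Ed'"

definition four_regular :: "'v set \<Rightarrow> 'h set \<Rightarrow> ('h \<Rightarrow> 'v) \<Rightarrow> bool" where
  "four_regular V H eps \<longleftrightarrow> (\<forall>v\<in>V. card {h\<in>H. eps h = v} = 4)"

definition orientation :: "'h set set \<Rightarrow> ('h set \<Rightarrow> 'h) \<Rightarrow> bool" where
  "orientation Ed tail \<longleftrightarrow> (\<forall>e\<in>Ed. tail e \<in> e)"

definition head_of :: "('h set \<Rightarrow> 'h) \<Rightarrow> 'h set \<Rightarrow> 'h" where
  "head_of tail e = the_elem (e - {tail e})"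

text \<open>Closed walks: lists of directed single transitions (h_1,h_2),...,(h_{n-1},h_n)
 such that {h_2,h_3},...,{h_n,h_1} are edges.\<close>
definition walk_edge :: "('h \<times> 'h) list \<Rightarrow> nat \<Rightarrow> 'h set" where
  "walk_edge W i = {snd (W ! i), fst (W ! ((i + 1) mod length W))}"

definition closed_walk :: "'h set \<Rightarrow> 'h set set \<Rightarrow> ('h \<Rightarrow> 'v) \<Rightarrow> ('h \<times> 'h) list \<Rightarrow> bool" where
  "closed_walk H Ed eps W \<longleftrightarrow>
     (\<forall>(a, b)\<in>set W. a \<in> H \<and> b \<in> H \<and> a \<noteq> b \<and> eps a = eps b) \<and>
     (\<forall>i<length W. walk_edge W i \<in> Ed)"

definition circuit :: "'h set \<Rightarrow> 'h set set \<Rightarrow> ('h \<Rightarrow> 'v) \<Rightarrow> ('h \<times> 'h) list \<Rightarrow> bool" where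
  "circuit H Ed eps W \<longleftrightarrow> closed_walk H Ed eps W \<and> W \<noteq> [] \<and>
     distinct (concat (map (\<lambda>(a, b). [a, b]) W))"

text \<open>A circuit partition, each circuit given with some orientation (and starting point).\<close>
definition circuit_partition :: "'h set \<Rightarrow> 'h set set \<Rightarrow> ('h \<Rightarrow> 'v) \<Rightarrow> ('h \<times> 'h) list set \<Rightarrow> bool" where
  "circuit_partition H Ed eps P \<longleftrightarrow> (\<forall>W\<in>P. circuit H Ed eps W) \<and>
     (\<forall>h\<in>H. \<exists>!(W, i). W \<in> P \<and> i < length W \<and> (h = fst (W ! i) \<or> h = snd (W ! i)))"

definition traversed_edges :: "('h \<times> 'h) list \<Rightarrow> 'h set set" where
  "traversed_edges W = {walk_edge W i | i. i < length W}"

text \<open>sigma(D,W)(e): traversals of e along its direction minus traversals against it.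
 Traversal of the edge {h_2,h_3} goes from h_2 to h_3; it is along the direction iff h_2 is the tail.\<close>
definition sigma :: "('h set \<Rightarrow> 'h) \<Rightarrow> ('h \<times> 'h) list \<Rightarrow> 'h set \<Rightarrow> int" where
  "sigma tail W e = (\<Sum>i<length W. if walk_edge W i = e then (if snd (W ! i) = tail e then 1 else -1) else 0)"

definition sigmaQ :: "('h set \<Rightarrow> 'h) \<Rightarrow> ('h \<times> 'h) list \<Rightarrow> 'h set \<Rightarrow> rat" where
  "sigmaQ tail W = (\<lambda>e. of_int (sigma tail W e))"

definition incidence :: "('h \<Rightarrow> 'v) \<Rightarrow> ('h set \<Rightarrow> 'h) \<Rightarrow> 'v \<Rightarrow> 'h set \<Rightarrow> rat" where
  "incidence eps tail v e =
     (if v = eps (tail e) \<and> v \<noteq> eps (head_of tail e) then 1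
      else if v = eps (head_of tail e) \<and> v \<noteq> eps (tail e) then -1 else 0)"

definition cycle_space :: "'v set \<Rightarrow> 'h set set \<Rightarrow> ('h \<Rightarrow> 'v) \<Rightarrow> ('h set \<Rightarrow> 'h) \<Rightarrow> ('h set \<Rightarrow> rat) set" where
  "cycle_space V Ed eps tail = {x. (\<forall>e. e \<notin> Ed \<longrightarrow> x e = 0) \<and>
     (\<forall>v\<in>V. (\<Sum>e\<in>Ed. incidence eps tail v e * x e) = 0)}"

definition lin_comb :: "(('b \<Rightarrow> 'a::comm_ring_1) \<Rightarrow> 'a) \<Rightarrow> ('b \<Rightarrow> 'a) set \<Rightarrow> 'b \<Rightarrow> 'a" where
  "lin_comb c S = (\<lambda>e. \<Sum>x\<in>S. c x * x e)"

definition span_of :: "('b \<Rightarrow> 'a::comm_ring_1) set \<Rightarrow> ('b \<Rightarrow> 'a) set" where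
  "span_of S = {lin_comb c T | c T. finite T \<and> T \<subseteq> S}"

definition lin_indep :: "('b \<Rightarrow> 'a::comm_ring_1) set \<Rightarrow> bool" where
  "lin_indep S \<longleftrightarrow> (\<forall>T c. finite T \<and> T \<subseteq> S \<and> lin_comb c T = (\<lambda>_. 0) \<longrightarrow> (\<forall>x\<in>T. c x = 0))"

definition cycle_basis ::
  "'v set \<Rightarrow> 'h set \<Rightarrow> 'h set set \<Rightarrow> ('h \<Rightarrow> 'v) \<Rightarrow> ('h set \<Rightarrow> 'h) \<Rightarrow> ('h \<times> 'h) list set \<Rightarrow> bool" where
  "cycle_basis V H Ed eps tail B \<longleftrightarrow> (\<forall>W\<in>B. closed_walk H Ed eps W) \<and>
     inj_on (sigma tail) B \<and> lin_indep (sigmaQ tail ` B) \<and>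
     span_of (sigmaQ tail ` B) = cycle_space V Ed eps tail"

definition cycle_spanning_set ::
  "'v set \<Rightarrow> 'h set \<Rightarrow> 'h set set \<Rightarrow> ('h \<Rightarrow> 'v) \<Rightarrow> ('h set \<Rightarrow> 'h) \<Rightarrow> ('h \<times> 'h) list set \<Rightarrow> bool" where
  "cycle_spanning_set V H Ed eps tail B \<longleftrightarrow> (\<forall>W\<in>B. closed_walk H Ed eps W) \<and>
     (\<exists>B'\<subseteq>B. cycle_basis V H Ed eps tail B')"

definition integral_cycle_spanning_set ::
  "'v set \<Rightarrow> 'h set \<Rightarrow> 'h set set \<Rightarrow> ('h \<Rightarrow> 'v) \<Rightarrow> ('h set \<Rightarrow> 'h) \<Rightarrow> ('h \<times> 'h) list set \<Rightarrow> bool" where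
  "integral_cycle_spanning_set V H Ed eps tail B \<longleftrightarrow> cycle_spanning_set V H Ed eps tail B \<and>
     (\<forall>W. closed_walk H Ed eps W \<longrightarrow> sigma tail W \<in> span_of (sigma tail ` B))"

end

theory Submission
  imports Defs
begin

(* Every edge e of E is traversed by a circuit C e of P, exactly once since C e is a circuit,
   and C e traverses no other edge of E; so on the coordinates in E the vector sigma (C e) is
   plus or minus the indicator of e.  Hence for x in the cycle space of F, subtracting
   x e * sigma (C e) e * sigma (C e) for all e in E leaves a vector vanishing on E, i.e. an
   element of the cycle space of F - E, which Gamma spans; the same coordinates show that a
   cycle basis of F - E together with the C e stays independent.  For integrality, the same
   subtraction applied to sigma W for a closed walk W of F leaves an integer circulation of
   F - E, which is an integer sum of closed walks of F - E (follow the support of the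
   circulation in the direction of its sign until the path closes up, subtract, and induct on
   the sum of the absolute values), hence lies in the integer span of Gamma. *)

definition fun_submodule :: "('b \<Rightarrow> 'a::comm_ring_1) set \<Rightarrow> bool" where
  "fun_submodule X \<longleftrightarrow> (\<lambda>_. 0) \<in> X \<and> (\<forall>x\<in>X. \<forall>y\<in>X. (\<lambda>e. x e + y e) \<in> X) \<and>
     (\<forall>a. \<forall>x\<in>X. (\<lambda>e. a * x e) \<in> X)"

lemma fun_submodule_add:
  "fun_submodule X \<Longrightarrow> x \<in> X \<Longrightarrow> y \<in> X \<Longrightarrow> (\<lambda>e. x e + y e) \<in> X"
  unfolding fun_submodule_def by blast

lemma fun_submodule_scale:
  "fun_submodule X \<Longrightarrow> x \<in> X \<Longrightarrow> (\<lambda>e. a * x e) \<in> X"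
  unfolding fun_submodule_def by blast

lemma fun_submodule_diff:
  assumes "fun_submodule X" "x \<in> X" "y \<in> X"
  shows "(\<lambda>e. x e - y e) \<in> X"
  using fun_submodule_add[OF assms(1,2) fun_submodule_scale[OF assms(1,3), of "-1"]] by simp

lemma fun_submodule_sum:
  assumes "fun_submodule X" "finite A" "\<And>i. i \<in> A \<Longrightarrow> f i \<in> X"
  shows "(\<lambda>e. \<Sum>i\<in>A. f i e) \<in> X"
  using assms(2,3)
proof (induction A rule: finite_induct)
  case empty
  then show ?case using assms(1) unfolding fun_submodule_def by simp
next
  case (insert i A)
  then have "(\<lambda>e. f i e + (\<Sum>i\<in>A. f i e)) \<in> X"
    by (intro fun_submodule_add[OF assms(1)]) auto
  then show ?case using insert.hyps by simp
qed

lemma span_of_minimal: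
  assumes "fun_submodule X" "S \<subseteq> X"
  shows "span_of S \<subseteq> X"
proof
  fix x assume "x \<in> span_of S"
  then obtain c T where x: "x = lin_comb c T" "finite T" "T \<subseteq> S"
    unfolding span_of_def by blast
  have "(\<lambda>e. \<Sum>z\<in>T. c z * z e) \<in> X"
    using x assms by (intro fun_submodule_sum fun_submodule_scale) auto
  then show "x \<in> X" using x(1) unfolding lin_comb_def by simp
qed

lemma span_of_superset: "x \<in> S \<Longrightarrow> x \<in> span_of S"
  unfolding span_of_def lin_comb_def
  by (rule CollectI, rule exI[of _ "\<lambda>_. 1"], rule exI[of _ "{x}"]) auto

lemma span_of_mono: "S \<subseteq> T \<Longrightarrow> span_of S \<subseteq> span_of T"
  unfolding span_of_def by blast

lemma lin_comb_restrict:
  assumes "finite T" "\<And>x. x \<in> T - T' \<Longrightarrow> c x = 0"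
  shows "lin_comb c (T \<inter> T') = lin_comb c T"
  unfolding lin_comb_def using assms by (intro ext sum.mono_neutral_left) auto

lemma fun_submodule_span_of: "fun_submodule (span_of S)"
  unfolding fun_submodule_def
proof (intro conjI ballI allI)
  show "(\<lambda>_. 0) \<in> span_of S"
    unfolding span_of_def lin_comb_def by (rule CollectI, rule exI[of _ "\<lambda>_. 0"]) auto
next
  fix x y assume "x \<in> span_of S" "y \<in> span_of S"
  then obtain c d T U where x: "x = lin_comb c T" "finite T" "T \<subseteq> S"
    and y: "y = lin_comb d U" "finite U" "U \<subseteq> S"
    unfolding span_of_def by blast
  have pad: "lin_comb c T = lin_comb (\<lambda>z. if z \<in> T then c z else 0) (T \<union> U)"
    if "finite T" "finite U" for c T U
    unfolding lin_comb_def using that by (intro ext sum.mono_neutral_cong_left) auto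
  have "(\<lambda>e. x e + y e) =
      lin_comb (\<lambda>z. (if z \<in> T then c z else 0) + (if z \<in> U then d z else 0)) (T \<union> U)"
    using pad[of T U c] pad[of U T d] x y
    by (simp add: lin_comb_def distrib_right sum.distrib Un_commute)
  then show "(\<lambda>e. x e + y e) \<in> span_of S" using x y unfolding span_of_def by blast
next
  fix a x assume "x \<in> span_of S"
  then obtain c T where x: "x = lin_comb c T" "finite T" "T \<subseteq> S"
    unfolding span_of_def by blast
  then have "(\<lambda>e. a * x e) = lin_comb (\<lambda>z. a * c z) T"
    unfolding lin_comb_def by (auto simp: sum_distrib_left mult.assoc)
  then show "(\<lambda>e. a * x e) \<in> span_of S" using x unfolding span_of_def by blast
qed

lemma lin_indep_Un_private_coordinates:
  fixes S Y :: "('b \<Rightarrow> 'a::idom) set"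
  assumes S: "lin_indep S"
    and own: "\<And>y. y \<in> Y \<Longrightarrow> \<exists>e. y e \<noteq> 0 \<and> (\<forall>z\<in>S \<union> Y. z e \<noteq> 0 \<longrightarrow> z = y)"
  shows "lin_indep (S \<union> Y)"
  unfolding lin_indep_def
proof (intro allI impI ballI)
  fix T c x
  assume "finite T \<and> T \<subseteq> S \<union> Y \<and> lin_comb c T = (\<lambda>_. 0)" and x: "x \<in> T"
  then have T: "finite T" "T \<subseteq> S \<union> Y" and dep: "lin_comb c T = (\<lambda>_. 0)" by auto
  have cY: "c y = 0" if y: "y \<in> T" "y \<in> Y" for y
  proof -
    obtain e where e: "y e \<noteq> 0" "\<forall>z\<in>S \<union> Y. z e \<noteq> 0 \<longrightarrow> z = y"
      using own[OF y(2)] by blast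
    have "0 = (\<Sum>z\<in>T. c z * z e)" using fun_cong[OF dep, of e] by (simp add: lin_comb_def)
    also have "\<dots> = c y * y e + (\<Sum>z\<in>T - {y}. c z * z e)" by (rule sum.remove[OF T(1) y(1)])
    also have "(\<Sum>z\<in>T - {y}. c z * z e) = 0" using e(2) T(2) by (intro sum.neutral) auto
    finally show ?thesis using e(1) by simp
  qed
  have "lin_comb c (T \<inter> S) = (\<lambda>_. 0)"
    using lin_comb_restrict[OF T(1), of S c] cY T(2) dep by auto
  then have "\<forall>z\<in>T \<inter> S. c z = 0" using S T(1) unfolding lin_indep_def by blast
  then show "c x = 0" using x T(2) cY by blast
qed

section \<open>Closed walks and the cycle space\<close>

lemma fun_submodule_cycle_space: "fun_submodule (cycle_space V Ed eps tail)"
proof -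
  have "(\<Sum>e\<in>Ed. incidence eps tail v e * (a * x e)) = a * (\<Sum>e\<in>Ed. incidence eps tail v e * x e)"
    for v a x
    by (simp add: sum_distrib_left mult.left_commute)
  then show ?thesis
    unfolding fun_submodule_def cycle_space_def by (auto simp: distrib_left sum.distrib)
qed

lemma cycle_space_Diff:
  assumes "x \<in> cycle_space V Ed eps tail" "\<And>e. e \<in> E \<Longrightarrow> x e = 0" "finite Ed"
  shows "x \<in> cycle_space V (Ed - E) eps tail"
proof -
  have "(\<Sum>e\<in>Ed - E. incidence eps tail v e * x e) = (\<Sum>e\<in>Ed. incidence eps tail v e * x e)" for v
    using assms(2,3) by (intro sum.mono_neutral_left) auto
  then show ?thesis using assms(1,2) unfolding cycle_space_def by (simp, blast)
qed

lemma is_graphD: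
  assumes "is_graph V H Ed eps"
  shows "finite Ed" "finite H" "\<And>h. h \<in> H \<Longrightarrow> eps h \<in> V"
    "\<And>e. e \<in> Ed \<Longrightarrow> card e = 2" "\<And>e. e \<in> Ed \<Longrightarrow> e \<subseteq> H" "\<And>h. h \<in> H \<Longrightarrow> \<exists>e\<in>Ed. h \<in> e"
    "\<And>e f. e \<in> Ed \<Longrightarrow> f \<in> Ed \<Longrightarrow> e \<noteq> f \<Longrightarrow> e \<inter> f = {}"
  using assms unfolding is_graph_def by (auto intro: finite_UnionD)

lemma is_graph_del:
  assumes "is_graph V H Ed eps" "E \<subseteq> Ed"
  shows "is_graph V (del_H H E) (Ed - E) eps"
proof -
  have G: "finite V" "finite H" "eps ` H \<subseteq> V" "\<forall>e\<in>Ed. card e = 2 \<and> e \<subseteq> H" "\<Union>Ed = H"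
     "\<forall>e\<in>Ed. \<forall>e'\<in>Ed. e \<noteq> e' \<longrightarrow> e \<inter> e' = {}"
    using assms(1) unfolding is_graph_def by simp_all
  have disj: "e \<inter> f = {}" if "e \<in> Ed - E" "f \<in> E" for e f
    using G(6) assms(2) that by (metis DiffE subsetD)
  have U: "\<Union>(Ed - E) = H - \<Union>E"
    using G(5) disj by blast
  show ?thesis unfolding is_graph_def del_H_def
    using G U by (simp add: image_subset_iff) blast
qed

lemma orientation_Diff: "orientation Ed tail \<Longrightarrow> orientation (Ed - E) tail"
  unfolding orientation_def by simp

lemma head_of_edge:
  assumes "card e = 2" "tail e \<in> e"
  shows "e = {tail e, head_of tail e}" "head_of tail e \<noteq> tail e"
proof -
  have "card (e - {tail e}) = 1" using assms by simp
  then obtain h where "e - {tail e} = {h}"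
    by (auto simp: card_1_singleton_iff)
  then show "e = {tail e, head_of tail e}" "head_of tail e \<noteq> tail e"
    using assms(2) unfolding head_of_def by auto
qed

lemma incidence_times_direction:
  assumes "a \<noteq> b" "tail {a, b} \<in> {a, b}"
  shows "incidence eps tail v {a, b} * (if a = tail {a, b} then 1 else -1) =
    of_bool (eps a = v) - of_bool (eps b = v)"
proof (cases "tail {a, b} = a")
  case True
  then have "head_of tail {a, b} = b" using assms(1) by (simp add: head_of_def insert_Diff_if)
  then show ?thesis using True by (auto simp: incidence_def)
next
  case False
  then have "tail {a, b} = b" "head_of tail {a, b} = a" using assms by (auto simp: head_of_def insert_Diff_if)
  then show ?thesis using assms(1) by (auto simp: incidence_def)
qed

lemma closed_walk_mono:
  "closed_walk H' Ed' eps W \<Longrightarrow> H' \<subseteq> H \<Longrightarrow> Ed' \<subseteq> Ed \<Longrightarrow> closed_walk H Ed eps W"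
  unfolding closed_walk_def by blast

lemma sigma_eq_0_if_not_edge:
  "closed_walk H Ed eps W \<Longrightarrow> e \<notin> Ed \<Longrightarrow> sigma tail W e = 0"
  unfolding closed_walk_def sigma_def by (intro sum.neutral) auto

lemma sigma_eq_0_if_not_traversed:
  "e \<notin> traversed_edges W \<Longrightarrow> sigma tail W e = 0"
  unfolding traversed_edges_def sigma_def by (intro sum.neutral) auto

lemma finite_traversed_edges: "finite (traversed_edges W)"
proof -
  have "traversed_edges W = walk_edge W ` {..<length W}"
    unfolding traversed_edges_def by auto
  then show ?thesis by simp
qed

lemma sum_lessThan_rotate:
  fixes g :: "nat \<Rightarrow> 'a::comm_monoid_add"
  shows "(\<Sum>i<n. g ((i + 1) mod n)) = (\<Sum>i<n. g i)"
proof (cases n)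
  case (Suc m)
  have "(\<Sum>i<Suc m. g ((i + 1) mod Suc m)) = (\<Sum>i<m. g (Suc i)) + g 0"
    by (simp add: mod_Suc)
  also have "\<dots> = (\<Sum>i<Suc m. g i)"
    by (subst sum.lessThan_Suc_shift) (simp add: add.commute)
  finally show ?thesis using Suc by simp
qed simp

lemma sigmaQ_in_cycle_space:
  assumes G: "is_graph V H Ed eps" and O: "orientation Ed tail" and W: "closed_walk H Ed eps W"
  shows "sigmaQ tail W \<in> cycle_space V Ed eps tail"
proof -
  let ?n = "length W"
  let ?next = "\<lambda>i. fst (W ! ((i + 1) mod ?n))"
  define dir where "dir i = (if snd (W ! i) = tail (walk_edge W i) then 1 else -1 :: rat)" for i
  have edge: "walk_edge W i \<in> Ed" if "i < ?n" for i
    using W that unfolding closed_walk_def by blast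
  have same_vertex: "eps (fst (W ! i)) = eps (snd (W ! i))" if "i < ?n" for i
    using W nth_mem[OF that] unfolding closed_walk_def by (auto split: prod.splits)
  have boundary: "incidence eps tail v (walk_edge W i) * dir i =
      of_bool (eps (snd (W ! i)) = v) - of_bool (eps (?next i) = v)" if i: "i < ?n" for i v
  proof -
    have e: "walk_edge W i = {snd (W ! i), ?next i}" unfolding walk_edge_def by simp
    have "card {snd (W ! i), ?next i} = 2" using is_graphD(4)[OF G edge[OF i]] e by simp
    then have "snd (W ! i) \<noteq> ?next i" by (metis card_2_iff doubleton_eq_iff)
    moreover have "tail {snd (W ! i), ?next i} \<in> {snd (W ! i), ?next i}"
      using O edge[OF i] e unfolding orientation_def by metis
    ultimately show ?thesis unfolding dir_def e by (rule incidence_times_direction)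
  qed
  have "(\<Sum>e\<in>Ed. incidence eps tail v e * sigmaQ tail W e) = 0" for v
  proof -
    have "(\<Sum>e\<in>Ed. incidence eps tail v e * sigmaQ tail W e)
        = (\<Sum>e\<in>Ed. \<Sum>i<?n. if walk_edge W i = e then incidence eps tail v e * dir i else 0)"
      unfolding sigmaQ_def sigma_def of_int_sum sum_distrib_left
      by (intro sum.cong refl) (auto simp: dir_def)
    also have "\<dots> = (\<Sum>i<?n. \<Sum>e\<in>Ed. if walk_edge W i = e then incidence eps tail v e * dir i else 0)"
      by (rule sum.swap)
    also have "\<dots> = (\<Sum>i<?n. incidence eps tail v (walk_edge W i) * dir i)"
      using is_graphD(1)[OF G] edge by (intro sum.cong refl) simp
    also have "\<dots> = (\<Sum>i<?n. of_bool (eps (snd (W ! i)) = v)) - (\<Sum>i<?n. of_bool (eps (?next i) = v))"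
      by (simp add: boundary sum_subtractf)
    also have "(\<Sum>i<?n. of_bool (eps (?next i) = v)) = (\<Sum>i<?n. of_bool (eps (fst (W ! i)) = v) :: rat)"
      by (rule sum_lessThan_rotate)
    also have "\<dots> = (\<Sum>i<?n. of_bool (eps (snd (W ! i)) = v))"
      using same_vertex by (intro sum.cong) auto
    finally show ?thesis by simp
  qed
  moreover have "sigmaQ tail W e = 0" if "e \<notin> Ed" for e
    using sigma_eq_0_if_not_edge[OF W that] unfolding sigmaQ_def by simp
  ultimately show ?thesis unfolding cycle_space_def by auto
qed

lemma set_concat_transitions:
  "set (concat (map (\<lambda>(a, b). [a, b]) W)) = fst ` set W \<union> snd ` set W"
  by (induction W) auto

lemma distinct_transitions:
  assumes "distinct (concat (map (\<lambda>(a, b). [a, b]) W))"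
  shows "distinct (map snd W)" "fst ` set W \<inter> snd ` set W = {}"
  using assms by (induction W) (force simp: set_concat_transitions simp del: set_concat)+

lemma circuit_walk_edge_inj:
  assumes W: "circuit H Ed eps W" and ij: "i < length W" "j < length W"
    and eq: "walk_edge W i = walk_edge W j"
  shows "i = j"
proof -
  have dist: "distinct (map snd W)" "fst ` set W \<inter> snd ` set W = {}"
    using W distinct_transitions unfolding circuit_def by blast+
  have "fst (W ! ((j + 1) mod length W)) \<in> fst ` set W" "snd (W ! i) \<in> snd ` set W"
    using ij by (auto intro!: imageI nth_mem mod_less_divisor)
  then have "snd (W ! i) \<noteq> fst (W ! ((j + 1) mod length W))"
    using dist(2) by (metis IntI empty_iff)
  then have "snd (W ! i) = snd (W ! j)"
    using eq unfolding walk_edge_def by (metis insertCI insertE singletonD)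
  then show ?thesis using nth_eq_iff_index_eq[OF dist(1), of i j] ij by simp
qed

lemma traversed_edges_iff: "e \<in> traversed_edges W \<longleftrightarrow> (\<exists>i<length W. walk_edge W i = e)"
  unfolding traversed_edges_def by auto

lemma abs_sigma_circuit:
  assumes W: "circuit H Ed eps W" and e: "e \<in> traversed_edges W"
  shows "\<bar>sigma tail W e\<bar> = 1"
proof -
  obtain i where i: "i < length W" "walk_edge W i = e"
    using e traversed_edges_iff by metis
  have "sigma tail W e = (\<Sum>k<length W. if k = i then (if snd (W ! k) = tail e then 1 else -1) else 0)"
    unfolding sigma_def
  proof (rule sum.cong[OF refl])
    fix k assume "k \<in> {..<length W}"
    then have "walk_edge W k = e \<longleftrightarrow> k = i"
      using circuit_walk_edge_inj[OF W _ i(1), of k] i(2) by force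
    then show "(if walk_edge W k = e then if snd (W ! k) = tail e then 1 else -1 else 0) =
        (if k = i then if snd (W ! k) = tail e then 1 else -1 else 0 :: int)" by simp
  qed
  then show ?thesis using i(1) by simp
qed

lemma fst_in_walk_edge:
  assumes "i < length W"
  shows "fst (W ! i) \<in> walk_edge W ((i + length W - 1) mod length W)"
proof -
  have "Suc (i + length W - 1) = i + length W" using assms by simp
  then have "((i + length W - 1) mod length W + 1) mod length W = i"
    using assms by (simp add: mod_Suc_eq)
  then show ?thesis unfolding walk_edge_def by simp
qed

lemma circuit_partition_covers_edge:
  assumes G: "is_graph V H Ed eps" and P: "circuit_partition H Ed eps P" and e: "e \<in> Ed"
  shows "\<exists>W\<in>P. e \<in> traversed_edges W"
proof -
  obtain h where h: "h \<in> e"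
    using is_graphD(4)[OF G e] by (metis card_2_iff insertI1)
  then have "h \<in> H" using is_graphD(5)[OF G e] by blast
  then obtain W i where W: "W \<in> P" "i < length W" "h = fst (W ! i) \<or> h = snd (W ! i)"
    using P unfolding circuit_partition_def by blast
  then obtain k where k: "k < length W" "h \<in> walk_edge W k"
    using fst_in_walk_edge[of i W]
    by (metis mod_less_divisor walk_edge_def insertI1 insertI2 gr_implies_not0 neq0_conv)
  have "walk_edge W k \<in> Ed"
    using P W(1) k(1) unfolding circuit_partition_def circuit_def closed_walk_def by blast
  then have "walk_edge W k = e" using is_graphD(7)[OF G _ e] h k(2) by blast
  then show ?thesis using W(1) k(1) unfolding traversed_edges_iff by auto
qed

section \<open>Integer circulations are integer sums of closed walks\<close>

definition flow_tail :: "('h set \<Rightarrow> 'h) \<Rightarrow> ('h set \<Rightarrow> int) \<Rightarrow> 'h set \<Rightarrow> 'h" where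
  "flow_tail tail u e = (if 0 < u e then tail e else head_of tail e)"

definition flow_head :: "('h set \<Rightarrow> 'h) \<Rightarrow> ('h set \<Rightarrow> int) \<Rightarrow> 'h set \<Rightarrow> 'h" where
  "flow_head tail u e = (if 0 < u e then head_of tail e else tail e)"

lemma flow_edge:
  assumes G: "is_graph V H Ed eps" and O: "orientation Ed tail" and e: "e \<in> Ed"
  shows "e = {flow_tail tail u e, flow_head tail u e}" "flow_tail tail u e \<noteq> flow_head tail u e"
    "flow_tail tail u e = tail e \<longleftrightarrow> 0 < u e"
  using head_of_edge[of e tail, OF is_graphD(4)[OF G e]] O e
  unfolding flow_tail_def flow_head_def orientation_def by auto

lemma circulation_leaves_head:
  assumes G: "is_graph V H Ed eps" and O: "orientation Ed tail"
    and u: "(\<lambda>e. of_int (u e) :: rat) \<in> cycle_space V Ed eps tail"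
    and e: "e \<in> Ed" "u e \<noteq> 0"
  shows "\<exists>f\<in>Ed. u f \<noteq> 0 \<and> eps (flow_tail tail u f) = eps (flow_head tail u e)"
proof (rule ccontr)
  assume none: "\<not> ?thesis"
  define w where "w = eps (flow_head tail u e)"
  have "flow_head tail u e \<in> H"
    using flow_edge(1)[OF G O e(1), of u] is_graphD(5)[OF G e(1)] by auto
  then have w: "w \<in> V" unfolding w_def using is_graphD(3)[OF G] by simp
  have no_exit: "eps (flow_tail tail u f) \<noteq> w" if "f \<in> Ed" "u f \<noteq> 0" for f
    using none that unfolding w_def by metis
  have "incidence eps tail w f * of_int (u f) \<le> 0" if "f \<in> Ed" for f
  proof (cases "0 < u f")
    case True
    then have "eps (tail f) \<noteq> w" using no_exit[OF that] unfolding flow_tail_def by simp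
    then show ?thesis using True unfolding incidence_def by (simp add: mult_le_0_iff)
  next
    case False
    then have "u f = 0 \<or> eps (head_of tail f) \<noteq> w" using no_exit[OF that] unfolding flow_tail_def by auto
    then show ?thesis using False unfolding incidence_def by (auto simp: mult_le_0_iff)
  qed
  moreover have "incidence eps tail w e * of_int (u e) < 0"
    using no_exit[OF e] e(2) unfolding w_def flow_tail_def flow_head_def incidence_def
    by (auto simp: mult_less_0_iff)
  ultimately have "(\<Sum>f\<in>Ed. incidence eps tail w f * of_int (u f)) < (\<Sum>f\<in>Ed. 0)"
    using is_graphD(1)[OF G] e(1) by (intro sum_strict_mono_ex1) auto
  moreover have "(\<Sum>f\<in>Ed. incidence eps tail w f * of_int (u f)) = 0"
    using u w unfolding cycle_space_def by auto
  ultimately show False by simp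
qed

lemma finite_self_map_cycle:
  assumes "finite S" "f ` S \<subseteq> S" "x \<in> S"
  shows "\<exists>c n. 0 < n \<and> range c \<subseteq> S \<and> (\<forall>k. c (Suc k) = f (c k)) \<and> c n = c 0 \<and> inj_on c {..<n}"
proof -
  define d where "d k = (f ^^ k) x" for k
  have d: "d k \<in> S" for k
    unfolding d_def by (induction k) (use assms(2,3) in auto)
  have "\<not> inj_on d {..card S}"
  proof
    assume "inj_on d {..card S}"
    then have "card (d ` {..card S}) = Suc (card S)" by (simp add: card_image)
    moreover have "card (d ` {..card S}) \<le> card S" using d by (intro card_mono[OF assms(1)]) auto
    ultimately show False by simp
  qed
  then have "\<exists>j. \<exists>i<j. d i = d j" unfolding inj_on_def by (metis linorder_neqE_nat)
  define j where "j = (LEAST j. \<exists>i<j. d i = d j)"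
  obtain i where ij: "i < j" "d i = d j"
    using LeastI_ex[OF \<open>\<exists>j. \<exists>i<j. d i = d j\<close>] unfolding j_def[symmetric] by blast
  have inj: "inj_on (\<lambda>k. d (i + k)) {..<j - i}"
  proof (rule inj_onI, rule ccontr)
    fix a b assume ab: "a \<in> {..<j - i}" "b \<in> {..<j - i}" "d (i + a) = d (i + b)" "a \<noteq> b"
    then obtain a' b' where a'b': "a' < b'" "b' < j - i" "d (i + a') = d (i + b')"
      by (metis lessThan_iff linorder_neqE_nat)
    then have "j \<le> i + b'" unfolding j_def by (intro Least_le exI[of _ "i + a'"]) simp
    then show False using a'b'(2) by simp
  qed
  show ?thesis
    using ij inj d by (intro exI[of _ "\<lambda>k. d (i + k)"] exI[of _ "j - i"]) (auto simp: d_def)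
qed

definition flow_walk ::
  "('h set \<Rightarrow> 'h) \<Rightarrow> ('h set \<Rightarrow> int) \<Rightarrow> (nat \<Rightarrow> 'h set) \<Rightarrow> nat \<Rightarrow> ('h \<times> 'h) list"
  where "flow_walk tail u c n = map (\<lambda>k. (flow_head tail u (c k), flow_tail tail u (c (Suc k)))) [0..<n]"

lemma walk_edge_flow_walk:
  assumes G: "is_graph V H Ed eps" and O: "orientation Ed tail" and c: "\<And>k. c k \<in> Ed"
    and n: "c n = c 0" and k: "k < n"
  shows "walk_edge (flow_walk tail u c n) k = c (Suc k)"
proof -
  have "c ((k + 1) mod n) = c (Suc k)"
    using k n by (cases "Suc k = n") auto
  moreover have "(k + 1) mod n < n" using k by simp
  ultimately show ?thesis
    using k flow_edge(1)[OF G O c[of "Suc k"], of u]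
    unfolding walk_edge_def flow_walk_def by (simp add: insert_commute)
qed

lemma closed_walk_flow_walk:
  assumes G: "is_graph V H Ed eps" and O: "orientation Ed tail" and c: "\<And>k. c k \<in> Ed"
    and succ: "\<And>k. eps (flow_tail tail u (c (Suc k))) = eps (flow_head tail u (c k))"
    and n: "c n = c 0"
  shows "closed_walk H Ed eps (flow_walk tail u c n)"
  unfolding closed_walk_def
proof (intro conjI ballI allI impI)
  fix x assume "x \<in> set (flow_walk tail u c n)"
  then obtain k where x: "x = (flow_head tail u (c k), flow_tail tail u (c (Suc k)))"
    unfolding flow_walk_def by auto
  have "flow_head tail u (c k) \<in> c k" "flow_tail tail u (c (Suc k)) \<in> c (Suc k)"
    using flow_edge(1)[OF G O c[of k], of u] flow_edge(1)[OF G O c[of "Suc k"], of u] by blast+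
  moreover have "flow_head tail u (c k) \<noteq> flow_tail tail u (c (Suc k))"
    using flow_edge(2)[OF G O c[of k], of u] is_graphD(7)[OF G c[of k] c[of "Suc k"]] calculation by fastforce
  ultimately show "case x of (a, b) \<Rightarrow> a \<in> H \<and> b \<in> H \<and> a \<noteq> b \<and> eps a = eps b"
    using x succ[of k] is_graphD(5)[OF G c[of k]] is_graphD(5)[OF G c[of "Suc k"]] by auto
next
  fix k assume "k < length (flow_walk tail u c n)"
  then show "walk_edge (flow_walk tail u c n) k \<in> Ed"
    using walk_edge_flow_walk[OF G O c n] c unfolding flow_walk_def by simp
qed

lemma sigma_flow_walk:
  assumes G: "is_graph V H Ed eps" and O: "orientation Ed tail"
    and c: "\<And>k. c k \<in> Ed" "\<And>k. u (c k) \<noteq> 0" and n: "c n = c 0" "inj_on c {..<n}"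
  shows "sigma tail (flow_walk tail u c n) e = (if \<exists>k<n. c (Suc k) = e then sgn (u e) else 0)"
proof -
  let ?C = "flow_walk tail u c n"
  note edge = walk_edge_flow_walk[OF G O c(1) n(1)]
  have len: "length ?C = n" unfolding flow_walk_def by simp
  have shift_inj: "k1 = k2" if "k1 < n" "k2 < n" "c (Suc k1) = c (Suc k2)" for k1 k2
  proof -
    have "c ((k + 1) mod n) = c (Suc k)" if "k < n" for k
      using that n(1) by (cases "Suc k = n") auto
    then have "(k1 + 1) mod n = (k2 + 1) mod n"
      using that n(2) unfolding inj_on_def by (metis lessThan_iff mod_less_divisor gr_implies_not0 neq0_conv)
    then show ?thesis using that by (auto simp: mod_Suc split: if_splits)
  qed
  show ?thesis
  proof (cases "\<exists>k<n. c (Suc k) = e")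
    case True
    then obtain k0 where k0: "k0 < n" "c (Suc k0) = e" by blast
    have "sigma tail ?C e = (\<Sum>k<n. if k = k0 then (if flow_tail tail u (c (Suc k)) = tail e then 1 else -1) else 0)"
      unfolding sigma_def len
    proof (rule sum.cong[OF refl])
      fix k assume "k \<in> {..<n}"
      then have "k < n" "walk_edge ?C k = e \<longleftrightarrow> k = k0"
        using edge shift_inj[OF _ k0(1)] k0(2) by force+
      then show "(if walk_edge ?C k = e then if snd (?C ! k) = tail e then 1 else -1 else 0) =
          (if k = k0 then if flow_tail tail u (c (Suc k)) = tail e then 1 else -1 else 0 :: int)"
        unfolding flow_walk_def by simp
    qed
    also have "\<dots> = sgn (u e)"
      using k0 flow_edge(3)[OF G O c(1)[of "Suc k0"], of u] c(2)[of "Suc k0"] by (auto simp: sgn_if)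
    finally show ?thesis using True by simp
  next
    case False
    then have "sigma tail ?C e = 0"
      unfolding sigma_def len using edge by (intro sum.neutral) auto
    then show ?thesis using False by auto
  qed
qed

lemma int_circulation_conformal_walk:
  assumes G: "is_graph V H Ed eps" and O: "orientation Ed tail"
    and u: "(\<lambda>e. of_int (u e) :: rat) \<in> cycle_space V Ed eps tail"
    and e0: "e0 \<in> Ed" "u e0 \<noteq> 0"
  shows "\<exists>C. closed_walk H Ed eps C \<and> (\<forall>e. sigma tail C e \<noteq> 0 \<longrightarrow> sigma tail C e = sgn (u e)) \<and>
    (\<exists>e. sigma tail C e \<noteq> 0)"
proof -
  define S where "S = {e \<in> Ed. u e \<noteq> 0}"
  have "\<forall>e\<in>S. \<exists>f\<in>S. eps (flow_tail tail u f) = eps (flow_head tail u e)"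
    using circulation_leaves_head[OF G O u] unfolding S_def by auto
  then obtain follow where follow: "\<And>e. e \<in> S \<Longrightarrow> follow e \<in> S"
    "\<And>e. e \<in> S \<Longrightarrow> eps (flow_tail tail u (follow e)) = eps (flow_head tail u e)"
    by metis
  have "finite S" "follow ` S \<subseteq> S" "e0 \<in> S"
    using is_graphD(1)[OF G] follow(1) e0 unfolding S_def by auto
  then obtain c n where c: "0 < n" "range c \<subseteq> S" "\<And>k. c (Suc k) = follow (c k)" "c n = c 0" "inj_on c {..<n}"
    using finite_self_map_cycle by metis
  have cS: "c k \<in> Ed" "u (c k) \<noteq> 0" for k
    using c(2) unfolding S_def by auto
  have succ: "eps (flow_tail tail u (c (Suc k))) = eps (flow_head tail u (c k))" for k
    using c(2,3) follow(2) by auto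
  define C where "C = flow_walk tail u c n"
  have C: "closed_walk H Ed eps C" "\<And>e. sigma tail C e = (if \<exists>k<n. c (Suc k) = e then sgn (u e) else 0)"
    unfolding C_def using closed_walk_flow_walk[OF G O cS(1) succ c(4)] sigma_flow_walk[where c = c and u = u, OF G O cS(1) cS(2) c(4) c(5)]
    by blast+
  have "sigma tail C (c 1) \<noteq> 0"
    using C(2)[of "c 1"] c(1) cS(2)[of 1] by (auto simp: sgn_if)
  moreover have "sigma tail C e = sgn (u e)" if "sigma tail C e \<noteq> 0" for e
    using that C(2)[of e] by (auto split: if_splits)
  ultimately show ?thesis using C(1) by blast
qed

lemma int_circulation_in_span_closed_walks:
  assumes G: "is_graph V H Ed eps" and O: "orientation Ed tail"
  shows "(\<lambda>e. of_int (u e) :: rat) \<in> cycle_space V Ed eps tail \<Longrightarrow>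
    u \<in> span_of (sigma tail ` {W. closed_walk H Ed eps W})"
proof (induction "\<Sum>e\<in>Ed. nat \<bar>u e\<bar>" arbitrary: u rule: less_induct)
  case less
  let ?S = "span_of (sigma tail ` {W. closed_walk H Ed eps W})"
  show ?case
  proof (cases "\<forall>e\<in>Ed. u e = 0")
    case True
    then have "u = (\<lambda>_. 0)" using less.prems unfolding cycle_space_def by auto
    then show ?thesis using fun_submodule_span_of unfolding fun_submodule_def by auto
  next
    case False
    then obtain e0 where e0: "e0 \<in> Ed" "u e0 \<noteq> 0" by blast
    obtain C e1 where C: "closed_walk H Ed eps C"
      and conformal: "\<And>e. sigma tail C e \<noteq> 0 \<Longrightarrow> sigma tail C e = sgn (u e)"
      and e1: "sigma tail C e1 \<noteq> 0"
      using int_circulation_conformal_walk[OF G O less.prems e0] by blast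
    define u' where "u' e = u e - sigma tail C e" for e
    have "(\<lambda>e. of_int (u' e) :: rat) = (\<lambda>e. of_int (u e) - sigmaQ tail C e)"
      unfolding u'_def sigmaQ_def by simp
    then have u': "(\<lambda>e. of_int (u' e) :: rat) \<in> cycle_space V Ed eps tail"
      using fun_submodule_diff[OF fun_submodule_cycle_space less.prems sigmaQ_in_cycle_space[OF G O C]]
      by simp
    have "nat \<bar>u' e\<bar> \<le> nat \<bar>u e\<bar>" for e
      using conformal[of e] unfolding u'_def by (cases "sigma tail C e = 0") (auto simp: sgn_if)
    moreover have "nat \<bar>u' e1\<bar> < nat \<bar>u e1\<bar>"
      using conformal[OF e1] e1 unfolding u'_def by (auto simp: sgn_if)
    moreover have "e1 \<in> Ed" using sigma_eq_0_if_not_edge[OF C] e1 by metis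
    ultimately have "(\<Sum>e\<in>Ed. nat \<bar>u' e\<bar>) < (\<Sum>e\<in>Ed. nat \<bar>u e\<bar>)"
      using is_graphD(1)[OF G] by (intro sum_strict_mono_ex1) auto
    then have "u' \<in> ?S" using less.hyps u' by blast
    moreover have "sigma tail C \<in> ?S" using C by (intro span_of_superset) simp
    ultimately have "(\<lambda>e. u' e + sigma tail C e) \<in> ?S"
      by (rule fun_submodule_add[OF fun_submodule_span_of])
    then show ?thesis unfolding u'_def by simp
  qed
qed

section \<open>Walks isolating the edges of E\<close>

definition isolating_walks ::
  "('h set \<Rightarrow> 'h) \<Rightarrow> 'h set set \<Rightarrow> ('h set \<Rightarrow> ('h \<times> 'h) list) \<Rightarrow> bool" where
  "isolating_walks tail E C \<longleftrightarrow>
     (\<forall>e\<in>E. \<bar>sigma tail (C e) e\<bar> = 1 \<and> (\<forall>e'\<in>E - {e}. sigma tail (C e) e' = 0))"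

lemma circuit_partition_isolating_walks:
  assumes G: "is_graph V H Ed eps" and P: "circuit_partition H Ed eps P" and E: "E \<subseteq> Ed"
    and one: "\<forall>W\<in>P. card (traversed_edges W \<inter> E) \<le> 1"
  shows "\<exists>C. C ` E \<subseteq> P \<and> isolating_walks tail E C"
proof -
  have "\<forall>e\<in>E. \<exists>W\<in>P. e \<in> traversed_edges W"
    using circuit_partition_covers_edge[OF G P] E by blast
  then obtain C where C: "\<And>e. e \<in> E \<Longrightarrow> C e \<in> P" "\<And>e. e \<in> E \<Longrightarrow> e \<in> traversed_edges (C e)"
    by metis
  have "isolating_walks tail E C"
    unfolding isolating_walks_def
  proof (intro ballI conjI)
    fix e assume e: "e \<in> E"
    have circuit: "circuit H Ed eps (C e)" using P C(1)[OF e] unfolding circuit_partition_def by blast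
    show "\<bar>sigma tail (C e) e\<bar> = 1" by (rule abs_sigma_circuit[OF circuit C(2)[OF e]])
    fix e' assume e': "e' \<in> E - {e}"
    have "card (traversed_edges (C e) \<inter> E) \<le> 1" using one C(1)[OF e] by blast
    then have "e' \<notin> traversed_edges (C e)"
      using e e' C(2)[OF e] finite_traversed_edges[of "C e"]
      by (auto simp: card_le_Suc0_iff_eq)
    then show "sigma tail (C e) e' = 0" by (rule sigma_eq_0_if_not_traversed)
  qed
  then show ?thesis using C(1) by blast
qed

text \<open>The factor sigma tail (C e) e is a unit and stands for its own inverse.\<close>
definition isolating_combination ::
  "('h set \<Rightarrow> 'h) \<Rightarrow> 'h set set \<Rightarrow> ('h set \<Rightarrow> ('h \<times> 'h) list) \<Rightarrow>
    ('h set \<Rightarrow> 'a::comm_ring_1) \<Rightarrow> 'h set \<Rightarrow> 'a"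
  where "isolating_combination tail E C x =
    (\<lambda>e'. \<Sum>e\<in>E. x e * of_int (sigma tail (C e) e) * of_int (sigma tail (C e) e'))"

lemma isolating_combination_eq:
  assumes iso: "isolating_walks tail E C" and "finite E" "e' \<in> E"
  shows "isolating_combination tail E C x e' = x e'"
proof -
  have unit: "sigma tail (C e') e' * sigma tail (C e') e' = 1"
    using iso assms(3) unfolding isolating_walks_def by (metis abs_mult_self_eq mult_1)
  have "isolating_combination tail E C x e' =
      x e' * of_int (sigma tail (C e') e') * of_int (sigma tail (C e') e') +
      (\<Sum>e\<in>E - {e'}. x e * of_int (sigma tail (C e) e) * of_int (sigma tail (C e) e'))"
    unfolding isolating_combination_def by (rule sum.remove[OF assms(2,3)])
  also have "(\<Sum>e\<in>E - {e'}. x e * of_int (sigma tail (C e) e) * of_int (sigma tail (C e) e')) = 0"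
  proof (intro sum.neutral ballI)
    fix e assume "e \<in> E - {e'}"
    then have "sigma tail (C e) e' = 0" using iso assms(3) unfolding isolating_walks_def by auto
    then show "x e * of_int (sigma tail (C e) e) * of_int (sigma tail (C e) e') = 0" by simp
  qed
  also have "x e' * of_int (sigma tail (C e') e') * of_int (sigma tail (C e') e') = x e'"
    using unit by (metis mult.assoc mult.right_neutral of_int_1 of_int_mult)
  finally show ?thesis by simp
qed

lemma isolating_combination_mem:
  assumes "fun_submodule X" "finite E" "\<And>e. e \<in> E \<Longrightarrow> (\<lambda>e'. of_int (sigma tail (C e) e')) \<in> X"
  shows "isolating_combination tail E C x \<in> X"
  unfolding isolating_combination_def
  using assms by (intro fun_submodule_sum fun_submodule_scale) auto

lemma cycle_space_diff_isolating_combination: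
  assumes G: "is_graph V H Ed eps" and O: "orientation Ed tail" and E: "E \<subseteq> Ed"
    and C: "\<And>e. e \<in> E \<Longrightarrow> closed_walk H Ed eps (C e)" and iso: "isolating_walks tail E C"
    and x: "x \<in> cycle_space V Ed eps tail"
  shows "(\<lambda>e. x e - isolating_combination tail E C x e) \<in> cycle_space V (Ed - E) eps tail"
proof (rule cycle_space_Diff)
  have "finite E" using is_graphD(1)[OF G] E by (rule finite_subset[rotated])
  then show "(\<lambda>e. x e - isolating_combination tail E C x e) \<in> cycle_space V Ed eps tail"
    using sigmaQ_in_cycle_space[OF G O C] unfolding sigmaQ_def
    by (intro fun_submodule_diff[OF fun_submodule_cycle_space x]
        isolating_combination_mem[OF fun_submodule_cycle_space])
  show "x e - isolating_combination tail E C x e = 0" if "e \<in> E" for e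
    using isolating_combination_eq[OF iso \<open>finite E\<close> that, where x = x] by simp
qed (use is_graphD(1)[OF G] in simp)

lemma isolating_walks_own_edge:
  assumes iso: "isolating_walks tail E C"
    and B: "\<forall>W\<in>B. closed_walk H' (Ed - E) eps W"
    and W: "W \<in> B \<union> C ` E" and e: "e \<in> E" "sigma tail W e \<noteq> 0"
  shows "W = C e"
proof -
  have "W \<notin> B" using sigma_eq_0_if_not_edge B e by blast
  then obtain e' where "e' \<in> E" "W = C e'" using W by blast
  then show ?thesis using iso e unfolding isolating_walks_def by blast
qed

lemma cycle_space_subset_span_Un_isolating_walks:
  assumes G: "is_graph V H Ed eps" and O: "orientation Ed tail" and E: "E \<subseteq> Ed"
    and B0: "cycle_space V (Ed - E) eps tail \<subseteq> span_of (sigmaQ tail ` B0)"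
    and C: "\<And>e. e \<in> E \<Longrightarrow> closed_walk H Ed eps (C e)" and iso: "isolating_walks tail E C"
  shows "cycle_space V Ed eps tail \<subseteq> span_of (sigmaQ tail ` (B0 \<union> C ` E))"
proof
  let ?S = "span_of (sigmaQ tail ` (B0 \<union> C ` E))"
  fix x assume x: "x \<in> cycle_space V Ed eps tail"
  let ?y = "isolating_combination tail E C x"
  have "(\<lambda>e. x e - ?y e) \<in> span_of (sigmaQ tail ` B0)"
    using cycle_space_diff_isolating_combination[OF G O E C iso x] B0 by blast
  then have "(\<lambda>e. x e - ?y e) \<in> ?S"
    using span_of_mono[of "sigmaQ tail ` B0" "sigmaQ tail ` (B0 \<union> C ` E)"] by blast
  moreover have "?y \<in> ?S"
    using finite_subset[OF E is_graphD(1)[OF G]]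
    by (intro isolating_combination_mem[OF fun_submodule_span_of] span_of_superset)
      (auto simp: sigmaQ_def[symmetric])
  ultimately have "(\<lambda>e. (x e - ?y e) + ?y e) \<in> ?S"
    by (rule fun_submodule_add[OF fun_submodule_span_of])
  then show "x \<in> ?S" by simp
qed

lemma isolating_walks_nonzero: "isolating_walks tail E C \<Longrightarrow> e \<in> E \<Longrightarrow> sigma tail (C e) e \<noteq> 0"
  unfolding isolating_walks_def by fastforce

lemma inj_on_sigma_Un_isolating_walks:
  assumes iso: "isolating_walks tail E C" and B: "\<forall>W\<in>B. closed_walk H' (Ed - E) eps W"
    and inj: "inj_on (sigma tail) B"
  shows "inj_on (sigma tail) (B \<union> C ` E)"
proof (rule inj_onI)
  fix W1 W2 assume W: "W1 \<in> B \<union> C ` E" "W2 \<in> B \<union> C ` E" "sigma tail W1 = sigma tail W2"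
  show "W1 = W2"
  proof (cases "W1 \<in> C ` E \<or> W2 \<in> C ` E")
    case True
    then obtain e where "e \<in> E" "W1 = C e \<or> W2 = C e" by blast
    then show ?thesis
      using isolating_walks_own_edge[OF iso B W(1)] isolating_walks_own_edge[OF iso B W(2)]
        isolating_walks_nonzero[OF iso] W(3) by metis
  next
    case False
    then show ?thesis using W inj unfolding inj_on_def by blast
  qed
qed

lemma lin_indep_sigmaQ_Un_isolating_walks:
  assumes iso: "isolating_walks tail E C" and B: "\<forall>W\<in>B. closed_walk H' (Ed - E) eps W"
    and indep: "lin_indep (sigmaQ tail ` B)"
  shows "lin_indep (sigmaQ tail ` (B \<union> C ` E))"
  unfolding image_Un
proof (rule lin_indep_Un_private_coordinates[OF indep])
  fix y assume "y \<in> sigmaQ tail ` C ` E"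
  then obtain e where e: "e \<in> E" "y = sigmaQ tail (C e)" unfolding image_image by (elim imageE)
  have "z = y" if z: "z \<in> sigmaQ tail ` B \<union> sigmaQ tail ` C ` E" "z e \<noteq> 0" for z
  proof -
    obtain W where W: "W \<in> B \<union> C ` E" "z = sigmaQ tail W"
      using z(1) unfolding image_Un[symmetric] by (elim imageE)
    then have "sigma tail W e \<noteq> 0" using z(2) unfolding sigmaQ_def by simp
    then show ?thesis using isolating_walks_own_edge[OF iso B W(1) e(1)] W(2) e(2) by simp
  qed
  then show "\<exists>e. y e \<noteq> 0 \<and> (\<forall>z\<in>sigmaQ tail ` B \<union> sigmaQ tail ` C ` E. z e \<noteq> 0 \<longrightarrow> z = y)"
    using isolating_walks_nonzero[OF iso e(1)] e(2) unfolding sigmaQ_def by auto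
qed

lemma cycle_basis_Un_isolating_walks:
  assumes G: "is_graph V H Ed eps" and O: "orientation Ed tail" and E: "E \<subseteq> Ed"
    and B0: "cycle_basis V (del_H H E) (Ed - E) eps tail B0"
    and C: "\<And>e. e \<in> E \<Longrightarrow> closed_walk H Ed eps (C e)" and iso: "isolating_walks tail E C"
  shows "cycle_basis V H Ed eps tail (B0 \<union> C ` E)"
proof -
  have B0_walks: "\<forall>W\<in>B0. closed_walk (del_H H E) (Ed - E) eps W"
    using B0 unfolding cycle_basis_def by blast
  have walks: "closed_walk H Ed eps W" if "W \<in> B0 \<union> C ` E" for W
    using that B0_walks C closed_walk_mono[of "del_H H E" "Ed - E" eps _ H Ed]
    unfolding del_H_def by blast
  have "span_of (sigmaQ tail ` (B0 \<union> C ` E)) = cycle_space V Ed eps tail"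
  proof
    show "span_of (sigmaQ tail ` (B0 \<union> C ` E)) \<subseteq> cycle_space V Ed eps tail"
      using sigmaQ_in_cycle_space[OF G O walks]
      by (intro span_of_minimal[OF fun_submodule_cycle_space]) blast
    show "cycle_space V Ed eps tail \<subseteq> span_of (sigmaQ tail ` (B0 \<union> C ` E))"
      using B0 unfolding cycle_basis_def
      by (intro cycle_space_subset_span_Un_isolating_walks[OF G O E _ C iso]) simp
  qed
  then show ?thesis
    using walks B0 inj_on_sigma_Un_isolating_walks[OF iso B0_walks]
      lin_indep_sigmaQ_Un_isolating_walks[OF iso B0_walks]
    unfolding cycle_basis_def by blast
qed

lemma closed_walk_in_int_span_Un_isolating_walks:
  assumes G: "is_graph V H Ed eps" and O: "orientation Ed tail" and E: "E \<subseteq> Ed"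
    and C: "\<And>e. e \<in> E \<Longrightarrow> closed_walk H Ed eps (C e)" and iso: "isolating_walks tail E C"
    and \<Gamma>: "\<And>W. closed_walk (del_H H E) (Ed - E) eps W \<Longrightarrow> sigma tail W \<in> span_of (sigma tail ` \<Gamma>)"
    and W: "closed_walk H Ed eps W"
  shows "sigma tail W \<in> span_of (sigma tail ` (\<Gamma> \<union> C ` E))"
proof -
  let ?S = "span_of (sigma tail ` (\<Gamma> \<union> C ` E))"
  let ?y = "isolating_combination tail E C (sigma tail W)"
  have finE: "finite E" using is_graphD(1)[OF G] E by (rule finite_subset[rotated])
  have "(\<lambda>e. of_int (sigma tail W e - ?y e) :: rat) =
      (\<lambda>e. sigmaQ tail W e - isolating_combination tail E C (sigmaQ tail W) e)"
    unfolding isolating_combination_def sigmaQ_def by simp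
  then have "(\<lambda>e. of_int (sigma tail W e - ?y e) :: rat) \<in> cycle_space V (Ed - E) eps tail"
    using cycle_space_diff_isolating_combination[OF G O E C iso sigmaQ_in_cycle_space[OF G O W]]
    by simp
  then have "(\<lambda>e. sigma tail W e - ?y e) \<in> span_of (sigma tail ` {W. closed_walk (del_H H E) (Ed - E) eps W})"
    by (rule int_circulation_in_span_closed_walks[OF is_graph_del[OF G E] orientation_Diff[OF O]])
  also have "\<dots> \<subseteq> span_of (sigma tail ` \<Gamma>)"
    using \<Gamma> by (intro span_of_minimal[OF fun_submodule_span_of]) blast
  also have "\<dots> \<subseteq> ?S"
    by (intro span_of_mono) blast
  finally have "(\<lambda>e. sigma tail W e - ?y e) \<in> ?S" .
  moreover have "?y \<in> ?S"
    using finE by (intro isolating_combination_mem[OF fun_submodule_span_of] span_of_superset) auto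
  ultimately have "(\<lambda>e. (sigma tail W e - ?y e) + ?y e) \<in> ?S"
    by (rule fun_submodule_add[OF fun_submodule_span_of])
  then show ?thesis by simp
qed

theorem mainTheorem6:
  fixes V :: "'v set" and H :: "'h set" and Ed :: "'h set set" and eps :: "'h \<Rightarrow> 'v"
    and tail :: "'h set \<Rightarrow> 'h" and P \<Gamma> :: "('h \<times> 'h) list set" and E :: "'h set set"
  assumes "is_graph V H Ed eps"
    and "four_regular V H eps"
    and "orientation Ed tail"
    and "circuit_partition H Ed eps P"
    and "E \<subseteq> Ed"
    and "\<forall>W\<in>P. card (traversed_edges W \<inter> E) \<le> 1"
    and "cycle_spanning_set V (del_H H E) (Ed - E) eps tail \<Gamma>"
  shows "cycle_spanning_set V H Ed eps tail (\<Gamma> \<union> P) \<and>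
         (integral_cycle_spanning_set V (del_H H E) (Ed - E) eps tail \<Gamma> \<longrightarrow>
          integral_cycle_spanning_set V H Ed eps tail (\<Gamma> \<union> P))"
proof -
  note G = assms(1) and O = assms(3) and E = assms(5)
  obtain C where CP: "C ` E \<subseteq> P" and iso: "isolating_walks tail E C"
    using circuit_partition_isolating_walks[OF G assms(4) E assms(6)] by blast
  have P_walks: "closed_walk H Ed eps W" if "W \<in> P" for W
    using assms(4) that unfolding circuit_partition_def circuit_def by blast
  have C_walks: "closed_walk H Ed eps (C e)" if "e \<in> E" for e
    using P_walks CP that by blast
  have \<Gamma>_walks: "closed_walk H Ed eps W" if "W \<in> \<Gamma>" for W
    using assms(7) that closed_walk_mono[of "del_H H E" "Ed - E" eps W H Ed]
    unfolding cycle_spanning_set_def del_H_def by blast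
  obtain B0 where "B0 \<subseteq> \<Gamma>" "cycle_basis V (del_H H E) (Ed - E) eps tail B0"
    using assms(7) unfolding cycle_spanning_set_def by blast
  then have "B0 \<union> C ` E \<subseteq> \<Gamma> \<union> P" "cycle_basis V H Ed eps tail (B0 \<union> C ` E)"
    using CP cycle_basis_Un_isolating_walks[OF G O E _ C_walks iso] by blast+
  then have spanning: "cycle_spanning_set V H Ed eps tail (\<Gamma> \<union> P)"
    using P_walks \<Gamma>_walks unfolding cycle_spanning_set_def by blast
  have "sigma tail W \<in> span_of (sigma tail ` (\<Gamma> \<union> P))"
    if "integral_cycle_spanning_set V (del_H H E) (Ed - E) eps tail \<Gamma>" "closed_walk H Ed eps W" for W
    using closed_walk_in_int_span_Un_isolating_walks[OF G O E C_walks iso _ that(2), of \<Gamma>] that(1)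
      span_of_mono[of "sigma tail ` (\<Gamma> \<union> C ` E)" "sigma tail ` (\<Gamma> \<union> P)"] CP
    unfolding integral_cycle_spanning_set_def by blast
  then show ?thesis using spanning unfolding integral_cycle_spanning_set_def by blast
qed

end
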